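(* Let $0<q<1$, $\alpha,\gamma\in\mathbb{C}$ with $q^\gamma\notin q^{\mathbb{Z}}$, and $z\in\mathbb{C}\setminus\{0\}$ (complex powers of $z$ taken with a fixed branch of $\log z$). For $n\in\mathbb{Z}$ put \begin{align*} \varphi_n&=(q^{n+\gamma};q)_\infty\,{}_1\phi_1(q^\alpha;q^{n+\gamma};q,-q^{n+\gamma}z),\\ \psi_n&=q^{-\alpha(n+\gamma)-(n+\gamma-1)(n+\gamma-2)/2}\,\frac{(q^{n+\gamma-\alpha};q)_\infty}{(q^{n+\gamma-1};q)_\infty}\,z^{1-n-\gamma}\,{}_1\phi_1(q^{\alpha-n-\gamma+1};q^{2-n-\gamma};q,-qz). \end{align*} Then \[ \varphi_0\psi_1-\varphi_1\psi_0=q^{-\alpha(\gamma+1)-\frac12\gamma(\gamma-1)}\,(q^{\gamma-\alpha+1};q)_\infty\,(-q^\alpha z;q)_\infty\,z^{-\gamma}. \] Equivalently, \begin{align*} &{}_1\phi_1(q^\alpha;q^\gamma;q,q^{\gamma-\alpha}z)\,{}_1\phi_1(q^{\alpha-\gamma};q^{1-\gamma};q,q^{1-\alpha}z)\\ &+\frac{q^{\gamma-1}(1-q^{\gamma-\alpha})z}{(1-q^{\gamma-1})(1-q^\gamma)}\,{}_1\phi_1(q^\alpha;q^{\gamma+1};q,q^{\gamma-\alpha+1}z)\,{}_1\phi_1(q^{\alpha-\gamma+1};q^{2-\gamma};q,q^{1-\alpha}z)=(z;q)_\infty. \end{align*}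
   Context: Complex powers of $q$ are $q^s=e^{s\log q}$. $(a;q)_k=\prod_{j=0}^{k-1}(1-aq^j)$, $(a;q)_\infty=\lim_k(a;q)_k$, and the $q$-confluent hypergeometric function is \[ {}_1\phi_1(a;b;q,z)=\sum_{k=0}^\infty(-1)^kq^{k(k-1)/2}\frac{(a;q)_k}{(b;q)_k(q;q)_k}\,z^k. \] *)

theory Defs
  imports "HOL-Analysis.Analysis"
begin

definition qpow :: "real \<Rightarrow> complex \<Rightarrow> complex" where
  "qpow q s = exp (s * complex_of_real (ln q))"

definition qpoch :: "complex \<Rightarrow> complex \<Rightarrow> nat \<Rightarrow> complex" where
  "qpoch a q k = (\<Prod>j<k. 1 - a * q ^ j)"

definition qpoch_inf :: "complex \<Rightarrow> complex \<Rightarrow> complex" where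
  "qpoch_inf a q = lim (\<lambda>k. qpoch a q k)"

definition phi11 :: "complex \<Rightarrow> complex \<Rightarrow> real \<Rightarrow> complex \<Rightarrow> complex" where
  "phi11 a b q z = (\<Sum>k. (-1) ^ k * complex_of_real (q ^ (k * (k - 1) div 2))
      * qpoch a (complex_of_real q) k
      / (qpoch b (complex_of_real q) k * qpoch (complex_of_real q) (complex_of_real q) k)
      * z ^ k)"

definition phiN :: "real \<Rightarrow> complex \<Rightarrow> complex \<Rightarrow> complex \<Rightarrow> int \<Rightarrow> complex" where
  "phiN q \<alpha> \<gamma> z n =
     qpoch_inf (qpow q (of_int n + \<gamma>)) (complex_of_real q)
     * phi11 (qpow q \<alpha>) (qpow q (of_int n + \<gamma>)) q (- qpow q (of_int n + \<gamma>) * z)"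

text \<open>psi_n; z^s is taken as exp (s * L), where L is the fixed branch of log z.\<close>
definition psiN :: "real \<Rightarrow> complex \<Rightarrow> complex \<Rightarrow> complex \<Rightarrow> int \<Rightarrow> complex" where
  "psiN q \<alpha> \<gamma> L n =
     qpow q (- \<alpha> * (of_int n + \<gamma>) - (of_int n + \<gamma> - 1) * (of_int n + \<gamma> - 2) / 2)
     * qpoch_inf (qpow q (of_int n + \<gamma> - \<alpha>)) (complex_of_real q)
     / qpoch_inf (qpow q (of_int n + \<gamma> - 1)) (complex_of_real q)
     * exp ((1 - of_int n - \<gamma>) * L)
     * phi11 (qpow q (\<alpha> - of_int n - \<gamma> + 1)) (qpow q (2 - of_int n - \<gamma>)) q
         (- complex_of_real q * exp L)"

end

(*
  Put a = q^alpha, b = q^gamma and consider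
    F(w) = 1phi1(a;b;q,bw/a) 1phi1(a/b;q/b;q,qw/a)
           + kappa w 1phi1(a;bq;q,bqw/a) 1phi1(aq/b;q^2/b;q,qw/a),
    kappa = (b/q)(1 - b/a) / ((1 - b/q)(1 - b)).
  Four contiguous relations of 1phi1, each a comparison of power series coefficients, express
  the four factors at w through their values at qw; substituting them, the cross terms cancel
  and F(w) = (1 - w) F(qw).  Since F is continuous with F(0) = 1, iterating gives
  F(w) = (w;q)_n F(q^n w) -> (w;q)_inf.  The second identity is F(z).  The Casoratian
  phi_0 psi_1 - phi_1 psi_0 is, after extracting the infinite products, F(-az) times the
  stated prefactor.  The case a = b = 0 of the same argument is Euler's expansion of (w;q)_inf,
  which supplies the shift relation and the non-vanishing of the infinite products involved.
*)

theory Submission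
  imports Defs
begin

lemma qpoch_0 [simp]: "qpoch a Q 0 = 1"
  by (simp add: qpoch_def)

lemma qpoch_Suc: "qpoch a Q (Suc k) = qpoch a Q k * (1 - a * Q ^ k)"
  by (simp add: qpoch_def)

lemma qpoch_Suc_shift: "qpoch a Q (Suc k) = (1 - a) * qpoch (a * Q) Q k"
  unfolding qpoch_def by (subst prod.lessThan_Suc_shift) (simp add: mult.assoc power_commutes)

definition q_regular :: "real \<Rightarrow> complex \<Rightarrow> bool" where
  "q_regular q b \<longleftrightarrow> (\<forall>j. b * complex_of_real q ^ j \<noteq> 1)"

lemma q_regular_nonzero_factor: "q_regular q b \<Longrightarrow> 1 - b * complex_of_real q ^ k \<noteq> 0"
  unfolding q_regular_def by auto

lemma q_regular_one_minus: "q_regular q b \<Longrightarrow> 1 - b \<noteq> 0"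
  using q_regular_nonzero_factor[of q b 0] by simp

lemma q_regular_mult_q: "q_regular q b \<Longrightarrow> q_regular q (b * complex_of_real q)"
  unfolding q_regular_def by (metis mult.assoc power_Suc)

lemma q_regular_0: "q_regular q 0"
  unfolding q_regular_def by simp

lemma qpoch_nonzero: "q_regular q b \<Longrightarrow> qpoch b (complex_of_real q) k \<noteq> 0"
  unfolding qpoch_def q_regular_def by auto

definition phi11_coeff :: "real \<Rightarrow> complex \<Rightarrow> complex \<Rightarrow> nat \<Rightarrow> complex" where
  "phi11_coeff q a b k = (-1) ^ k * complex_of_real (q ^ (k * (k - 1) div 2))
      * qpoch a (complex_of_real q) k
      / (qpoch b (complex_of_real q) k * qpoch (complex_of_real q) (complex_of_real q) k)"

lemma phi11_eq_suminf: "phi11 a b q x = (\<Sum>k. phi11_coeff q a b k * x ^ k)"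
  unfolding phi11_def phi11_coeff_def by simp

lemma phi11_coeff_0 [simp]: "phi11_coeff q a b 0 = 1"
  by (simp add: phi11_coeff_def)

lemma phi11_at_0 [simp]: "phi11 a b q 0 = 1"
  unfolding phi11_eq_suminf by simp

lemma triangular_Suc: "Suc k * (Suc k - 1) div 2 = k * (k - 1) div 2 + k"
proof -
  have "Suc k * k = k * (k - 1) + 2 * k" by (cases k) (auto simp: algebra_simps)
  then show ?thesis by simp
qed

lemma qpow_add: "qpow q (s + t) = qpow q s * qpow q t"
  unfolding qpow_def by (simp add: distrib_right exp_add)

lemma qpow_diff: "qpow q (s - t) = qpow q s / qpow q t"
  unfolding qpow_def by (simp add: left_diff_distrib exp_diff)

lemma qpow_nonzero: "qpow q s \<noteq> 0"
  unfolding qpow_def by simp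

lemma qpow_minus: "qpow q (- s) = inverse (qpow q s)"
  unfolding qpow_def by (simp add: exp_minus)

lemma qpow_of_nat:
  assumes "0 < q"
  shows "qpow q (of_nat n) = complex_of_real q ^ n"
proof -
  have "qpow q (of_nat n) = exp (complex_of_real (ln q)) ^ n"
    unfolding qpow_def by (simp add: exp_of_nat_mult[symmetric] mult.commute)
  then show ?thesis
    using assms by (simp add: exp_of_real)
qed

lemma qpow_1: "0 < q \<Longrightarrow> qpow q 1 = complex_of_real q"
  using qpow_of_nat[of q 1] by simp

lemma sums_mult_variable:
  fixes g :: "nat \<Rightarrow> 'a::real_normed_field"
  assumes "(\<lambda>k. g k * x ^ k) sums G"
  shows "(\<lambda>k. (case k of 0 \<Rightarrow> 0 | Suc m \<Rightarrow> g m) * x ^ k) sums (x * G)"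
proof -
  have "(\<lambda>k. (case Suc k of 0 \<Rightarrow> 0 | Suc m \<Rightarrow> g m) * x ^ Suc k) sums (x * G)"
    using sums_mult[OF assms, of x] by (simp add: ac_simps)
  then show ?thesis
    by (subst (asm) sums_Suc_iff) simp
qed
lemma qpoch_functional_iterate:
  assumes rec: "\<And>w. F w = (1 - w) * F (Q * w)"
  shows "F w = qpoch w Q n * F (Q ^ n * w)"
proof (induction n)
  case (Suc n)
  then show ?case
    using rec[of "Q ^ n * w"] by (simp add: qpoch_Suc ac_simps)
qed simp

lemma tendsto_functional_solution_orbit:
  fixes F :: "complex \<Rightarrow> complex"
  assumes "norm Q < 1" "isCont F 0" "F 0 = 1"
  shows "(\<lambda>n. F (Q ^ n * w)) \<longlonglongrightarrow> 1"
proof -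
  have "(\<lambda>n. Q ^ n * w) \<longlonglongrightarrow> 0 * w"
    using assms(1) by (intro tendsto_intros LIMSEQ_power_zero)
  from isCont_tendsto_compose[OF assms(2) this[simplified]] show ?thesis
    using assms(3) by simp
qed

lemma tendsto_qpoch_functional_solution:
  fixes F :: "complex \<Rightarrow> complex"
  assumes "norm Q < 1" "isCont F 0" "F 0 = 1" and rec: "\<And>w. F w = (1 - w) * F (Q * w)"
  shows "(\<lambda>n. qpoch w Q n) \<longlonglongrightarrow> F w"
proof -
  have tail: "(\<lambda>n. F (Q ^ n * w)) \<longlonglongrightarrow> 1"
    using assms(1-3) by (rule tendsto_functional_solution_orbit)
  have iter: "F w = qpoch w Q n * F (Q ^ n * w)" for n
    using rec by (rule qpoch_functional_iterate)
  have "eventually (\<lambda>n. F (Q ^ n * w) \<noteq> 0) sequentially"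
    using tendsto_imp_eventually_ne[OF tail] by simp
  then have "eventually (\<lambda>n. F w / F (Q ^ n * w) = qpoch w Q n) sequentially"
    by eventually_elim (metis iter nonzero_mult_div_cancel_right)
  moreover have "(\<lambda>n. F w / F (Q ^ n * w)) \<longlonglongrightarrow> F w / 1"
    by (intro tendsto_intros tail) simp
  ultimately show ?thesis
    by (simp add: Lim_transform_eventually)
qed

lemma qpoch_inf_eq_functional_solution:
  fixes F :: "complex \<Rightarrow> complex"
  assumes "norm Q < 1" "isCont F 0" "F 0 = 1" "\<And>w. F w = (1 - w) * F (Q * w)"
  shows "qpoch_inf w Q = F w"
  unfolding qpoch_inf_def using tendsto_qpoch_functional_solution[OF assms] by (rule limI)

lemma functional_solution_nonzero:
  fixes F :: "complex \<Rightarrow> complex"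
  assumes "norm Q < 1" "isCont F 0" "F 0 = 1" and rec: "\<And>w. F w = (1 - w) * F (Q * w)"
    and "\<And>n. qpoch w Q n \<noteq> 0"
  shows "F w \<noteq> 0"
proof -
  have "eventually (\<lambda>n. F (Q ^ n * w) \<noteq> 0) sequentially"
    using tendsto_imp_eventually_ne[OF tendsto_functional_solution_orbit[OF assms(1-3)]] by simp
  then obtain n where "F (Q ^ n * w) \<noteq> 0"
    by (auto simp: eventually_sequentially)
  then show ?thesis
    using assms(5)[of n] qpoch_functional_iterate[OF rec, of w n] by simp
qed

lemma bilinear_pairing_transform:
  fixes ma mb mc md na nb nc nd k k' w A B C D :: complex
  assumes "ma * na + k * mc * nc = w" "ma * nb + k * mc * nd = 0"
    and "mb * na + k * md * nc = 0" "mb * nb + k * md * nd = w * k'"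
  shows "(ma * A + mb * C) * (na * B + nb * D) + k * (mc * A + md * C) * (nc * B + nd * D)
     = w * (A * B + k' * C * D)"
proof -
  have "(ma * A + mb * C) * (na * B + nb * D) + k * (mc * A + md * C) * (nc * B + nd * D)
    = (ma * na + k * mc * nc) * A * B + (ma * nb + k * mc * nd) * A * D
     + (mb * na + k * md * nc) * C * B + (mb * nb + k * md * nd) * C * D"
    by (simp add: algebra_simps)
  then show ?thesis
    unfolding assms by (simp add: algebra_simps)
qed

lemma product_recurrence_coefficients:
  fixes a b Q z A B C D :: complex
  assumes "a \<noteq> 0" "b \<noteq> 0" "Q \<noteq> 0" "1 - b \<noteq> 0" "1 - b / Q \<noteq> 0" "1 - Q / b \<noteq> 0"
    and \<kappa>: "\<kappa> = b / Q * (1 - b / a) / ((1 - b / Q) * (1 - b))"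
  shows "((1 - b / a * z) * A - b / a * z * (b - a) / (1 - b) * C)
          * (B - Q / a * z * (1 - a / b) / (1 - Q / b) * D)
        + \<kappa> * z * ((1 - b) * A + b * C) * ((1 - Q / b) * B + (Q / b - Q / a * z) * D)
       = (1 - z) * (A * B + \<kappa> * (Q * z) * C * D)"
proof -
  have Qb: "Q - b \<noteq> 0"
    using assms(3,5) by (auto simp: field_simps)
  \<comment> \<open>\<open>algebra\<close> proves ring identities only, so the needed inverses are supplied as facts\<close>
  then have inverses: "a * inverse a = 1" "b * inverse b = 1" "Q * inverse Q = 1"
    "(1 - b) * inverse (1 - b) = 1" "(1 - Q * inverse b) * inverse (1 - Q * inverse b) = 1"
    "(Q - b) * inverse (Q - b) = 1"
    using assms(1-6) by (auto simp: divide_inverse)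
  have "b / Q * (1 - b / a) = b * (a - b) / (Q * a)" "(1 - b / Q) * (1 - b) = (Q - b) * (1 - b) / Q"
    using assms(1,3) by (simp_all add: field_simps)
  then have \<kappa>': "\<kappa> = b * (a - b) / (a * (Q - b) * (1 - b))"
    unfolding \<kappa> using assms(1,3,4) Qb by (simp add: divide_simps)
  define u where "u = b / a * z * (b - a) / (1 - b)"
  define v where "v = Q / a * z * (1 - a / b) / (1 - Q / b)"
  have "((1 - b / a * z) * A - u * C) * (B - v * D)
      + \<kappa> * z * ((1 - b) * A + b * C) * ((1 - Q / b) * B + (Q / b - Q / a * z) * D)
      = ((1 - b / a * z) * A + (- u) * C) * (1 * B + (- v) * D)
      + (\<kappa> * z) * ((1 - b) * A + b * C) * ((1 - Q / b) * B + (Q / b - Q / a * z) * D)"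
    by (simp add: ac_simps)
  also have "\<dots> = (1 - z) * (A * B + \<kappa> * (Q * z) * C * D)"
  proof (rule bilinear_pairing_transform)
    show "(1 - b / a * z) * 1 + \<kappa> * z * (1 - b) * (1 - Q / b) = 1 - z"
      unfolding \<kappa>' divide_inverse inverse_mult_distrib using inverses by algebra
    show "(1 - b / a * z) * - v + \<kappa> * z * (1 - b) * (Q / b - Q / a * z) = 0"
      unfolding \<kappa>' v_def divide_inverse inverse_mult_distrib using inverses by algebra
    show "- u * 1 + \<kappa> * z * b * (1 - Q / b) = 0"
      unfolding \<kappa>' u_def divide_inverse inverse_mult_distrib using inverses by algebra
    show "- u * - v + \<kappa> * z * b * (Q / b - Q / a * z) = (1 - z) * (\<kappa> * (Q * z))"
      unfolding \<kappa>' u_def v_def divide_inverse inverse_mult_distrib using inverses by algebra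
  qed
  finally show ?thesis
    unfolding u_def v_def .
qed

locale q_calculus =
  fixes q :: real
  assumes q_pos: "0 < q" and q_less_1: "q < 1"
begin

abbreviation Q :: complex where "Q \<equiv> complex_of_real q"

lemma norm_Q_less_1: "norm Q < 1"
  using q_pos q_less_1 by simp

lemma q_regular_Q: "q_regular q Q"
proof -
  have "q * q ^ j < 1" for j
    using power_Suc_less_one[OF q_pos q_less_1] by simp
  then show ?thesis
    unfolding q_regular_def by (metis less_irrefl of_real_eq_1_iff of_real_mult of_real_power)
qed

lemma one_minus_Q_power_nonzero: "1 - Q ^ Suc k \<noteq> 0"
  using q_regular_nonzero_factor[OF q_regular_Q, of k] by simp

lemma phi11_coeff_Suc:
  assumes "q_regular q b"
  shows "phi11_coeff q a b (Suc k) = phi11_coeff q a b k * (- (Q ^ k) * (1 - a * Q ^ k))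
     / ((1 - b * Q ^ k) * (1 - Q ^ Suc k))"
  using q_regular_nonzero_factor[OF assms, of k] q_regular_nonzero_factor[OF q_regular_Q, of k]
    qpoch_nonzero[OF assms, of k] qpoch_nonzero[OF q_regular_Q, of k]
  unfolding phi11_coeff_def triangular_Suc
  by (simp add: qpoch_Suc power_add field_simps)

lemma phi11_coeff_factor:
  "phi11_coeff q a b k = qpoch a Q k * phi11_coeff q 0 0 k / qpoch b Q k"
  unfolding phi11_coeff_def by (simp add: qpoch_def ac_simps)

lemma phi11_coeff_0_0_Suc:
  "phi11_coeff q 0 0 (Suc k) = - (Q ^ k) * phi11_coeff q 0 0 k / (1 - Q ^ Suc k)"
  using qpoch_nonzero[OF q_regular_Q, of k] q_regular_nonzero_factor[OF q_regular_Q, of k]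
  unfolding phi11_coeff_def triangular_Suc
  by (simp add: qpoch_Suc power_add field_simps)

lemma phi11_coeff_contiguous_b:
  assumes "q_regular q b"
  shows "(1 - b * Q ^ k) * phi11_coeff q a (b * Q) k = (1 - b) * phi11_coeff q a b k"
proof -
  have "qpoch (b * Q) Q k = qpoch b Q k * (1 - b * Q ^ k) / (1 - b)"
    using qpoch_Suc[of b Q k] qpoch_Suc_shift[of b Q k] q_regular_one_minus[OF assms]
    by (simp add: field_simps)
  then show ?thesis
    using q_regular_nonzero_factor[OF assms, of k] q_regular_one_minus[OF assms]
    unfolding phi11_coeff_factor[of a b] phi11_coeff_factor[of a "b * Q"]
    by simp
qed

lemma phi11_coeff_q_difference_ab:
  assumes "q_regular q b"
  shows "(1 - b) * (1 - Q ^ Suc k) * phi11_coeff q a b (Suc k)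
     = - (1 - a) * Q ^ k * phi11_coeff q (a * Q) (b * Q) k"
proof -
  have coeff_Suc: "phi11_coeff q a b (Suc k)
      = (1 - a) * qpoch (a * Q) Q k * (- (Q ^ k) * phi11_coeff q 0 0 k / (1 - Q ^ Suc k))
        / ((1 - b) * qpoch (b * Q) Q k)"
    unfolding phi11_coeff_factor[of a b] phi11_coeff_0_0_Suc qpoch_Suc_shift ..
  show ?thesis
    using one_minus_Q_power_nonzero[of k] q_regular_one_minus[OF assms]
      qpoch_nonzero[OF q_regular_mult_q[OF assms], of k]
    unfolding coeff_Suc phi11_coeff_factor[of "a * Q"]
    by (simp add: divide_simps) (simp add: algebra_simps)
qed

lemma phi11_coeff_q_difference_b:
  assumes "q_regular q b"
  shows "(1 - Q ^ Suc k) * phi11_coeff q a b (Suc k)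
     = - (Q ^ k) * phi11_coeff q a b k - (b - a) / (1 - b) * (Q ^ k * Q ^ k) * phi11_coeff q a (b * Q) k"
proof -
  have bQ: "phi11_coeff q a (b * Q) k = (1 - b) * phi11_coeff q a b k / (1 - b * Q ^ k)"
    using phi11_coeff_contiguous_b[OF assms, of k a] q_regular_nonzero_factor[OF assms, of k]
    by (simp add: field_simps)
  show ?thesis
    using one_minus_Q_power_nonzero[of k] q_regular_nonzero_factor[OF assms, of k]
      q_regular_one_minus[OF assms]
    unfolding phi11_coeff_Suc[OF assms] bQ
    by (simp add: divide_simps) (simp add: algebra_simps)
qed

lemma phi11_coeff_contiguous_ab:
  assumes "q_regular q b"
  shows "(1 - b * Q ^ Suc k) * phi11_coeff q (a * Q) (b * Q) (Suc k)
     = (1 - b) * Q ^ Suc k * phi11_coeff q a b (Suc k) - Q ^ k * phi11_coeff q (a * Q) (b * Q) k"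
proof -
  have ab: "(1 - b) * phi11_coeff q a b (Suc k)
      = - (1 - a) * Q ^ k * phi11_coeff q (a * Q) (b * Q) k / (1 - Q ^ Suc k)"
    using phi11_coeff_q_difference_ab[OF assms, of k a] one_minus_Q_power_nonzero[of k]
    by (simp add: field_simps)
  have ab': "(1 - b) * Q ^ Suc k * phi11_coeff q a b (Suc k)
      = Q ^ Suc k * (- (1 - a) * Q ^ k * phi11_coeff q (a * Q) (b * Q) k / (1 - Q ^ Suc k))"
    by (subst ab[symmetric]) (simp add: ac_simps)
  show ?thesis
    using one_minus_Q_power_nonzero[of k] q_regular_nonzero_factor[OF assms, of "Suc k"]
    unfolding phi11_coeff_Suc[OF q_regular_mult_q[OF assms]] ab'
    by (simp add: divide_simps) (simp add: algebra_simps)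
qed

lemma summable_phi11_series:
  assumes "q_regular q b"
  shows "summable (\<lambda>k. phi11_coeff q a b k * x ^ k)"
proof -
  define r where
    "r k = q ^ k * norm (1 - a * Q ^ k) * norm x / (norm (1 - b * Q ^ k) * norm (1 - Q ^ Suc k))" for k
  have "r \<longlonglongrightarrow> 0 * norm (1 - a * 0) * norm x / (norm (1 - b * 0) * norm (1 - Q * 0))"
    unfolding r_def power_Suc using q_pos norm_Q_less_1 by (intro tendsto_intros LIMSEQ_power_zero) auto
  then have "eventually (\<lambda>k. r k < 1 / 2) sequentially"
    by (intro order_tendstoD) auto
  then obtain N where N: "\<And>k. k \<ge> N \<Longrightarrow> r k < 1 / 2"
    by (auto simp: eventually_sequentially)
  show ?thesis
  proof (rule summable_ratio_test[of "1 / 2" N])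
    fix k assume "k \<ge> N"
    have "norm (phi11_coeff q a b (Suc k) * x ^ Suc k) = r k * norm (phi11_coeff q a b k * x ^ k)"
      unfolding phi11_coeff_Suc[OF assms] r_def using q_pos
      by (simp add: norm_mult norm_divide norm_power)
    also have "\<dots> \<le> 1 / 2 * norm (phi11_coeff q a b k * x ^ k)"
      using N[OF \<open>k \<ge> N\<close>] by (intro mult_right_mono) auto
    finally show "norm (phi11_coeff q a b (Suc k) * x ^ Suc k)
        \<le> 1 / 2 * norm (phi11_coeff q a b k * x ^ k)" .
  qed simp
qed

lemma phi11_sums:
  assumes "q_regular q b"
  shows "(\<lambda>k. phi11_coeff q a b k * x ^ k) sums phi11 a b q x"
  unfolding phi11_eq_suminf using summable_phi11_series[OF assms] by (rule summable_sums)

lemma phi11_sums_scaled: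
  assumes "q_regular q b"
  shows "(\<lambda>k. phi11_coeff q a b k * y ^ k * x ^ k) sums phi11 a b q (y * x)"
  using phi11_sums[OF assms, of a "y * x"] by (simp add: power_mult_distrib mult.assoc)

lemma phi11_contiguous_b:
  assumes b: "q_regular q b"
  shows "phi11 a (b * Q) q x = (1 - b) * phi11 a b q x + b * phi11 a (b * Q) q (Q * x)"
proof -
  have "(\<lambda>k. ((1 - b) * phi11_coeff q a b k + b * (phi11_coeff q a (b * Q) k * Q ^ k)) * x ^ k)
      sums ((1 - b) * phi11 a b q x + b * phi11 a (b * Q) q (Q * x))"
    using sums_add[OF sums_mult[OF phi11_sums[OF b, of a x], of "1 - b"]
        sums_mult[OF phi11_sums_scaled[OF q_regular_mult_q[OF b], of a Q x], of b]]
    by (simp add: algebra_simps)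
  moreover have "(1 - b) * phi11_coeff q a b k + b * (phi11_coeff q a (b * Q) k * Q ^ k)
      = phi11_coeff q a (b * Q) k" for k
    using phi11_coeff_contiguous_b[OF b, of k a] by (simp add: algebra_simps)
  ultimately show ?thesis
    by (intro sums_unique2[OF phi11_sums[OF q_regular_mult_q[OF b]]]) simp
qed

lemma phi11_q_difference_b:
  assumes b: "q_regular q b"
  shows "phi11 a b q x
    = (1 - x) * phi11 a b q (Q * x) - x * (b - a) / (1 - b) * phi11 a (b * Q) q (Q * Q * x)"
proof -
  define g where
    "g k = phi11_coeff q a b k * Q ^ k + (b - a) / (1 - b) * (phi11_coeff q a (b * Q) k * (Q * Q) ^ k)" for k
  have "(\<lambda>k. g k * x ^ k) sums (phi11 a b q (Q * x) + (b - a) / (1 - b) * phi11 a (b * Q) q (Q * Q * x))"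
    using sums_add[OF phi11_sums_scaled[OF b, of a Q x]
        sums_mult[OF phi11_sums_scaled[OF q_regular_mult_q[OF b], of a "Q * Q" x], of "(b - a) / (1 - b)"]]
    unfolding g_def by (simp add: algebra_simps)
  then have "(\<lambda>k. (phi11_coeff q a b k * Q ^ k - (case k of 0 \<Rightarrow> 0 | Suc m \<Rightarrow> g m)) * x ^ k)
      sums (phi11 a b q (Q * x) - x * (phi11 a b q (Q * x) + (b - a) / (1 - b) * phi11 a (b * Q) q (Q * Q * x)))"
    unfolding left_diff_distrib by (intro sums_diff phi11_sums_scaled[OF b] sums_mult_variable)
  moreover have "phi11_coeff q a b k * Q ^ k - (case k of 0 \<Rightarrow> 0 | Suc m \<Rightarrow> g m) = phi11_coeff q a b k" for k
    using phi11_coeff_q_difference_b[OF b, of "k - 1" a]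
    by (cases k) (simp_all add: g_def power_mult_distrib algebra_simps)
  ultimately have "phi11 a b q x
      = phi11 a b q (Q * x) - x * (phi11 a b q (Q * x) + (b - a) / (1 - b) * phi11 a (b * Q) q (Q * Q * x))"
    by (intro sums_unique2[OF phi11_sums[OF b]]) simp
  then show ?thesis
    by (simp add: algebra_simps)
qed

lemma phi11_q_difference_ab:
  assumes b: "q_regular q b"
  shows "phi11 a b q x
    = phi11 a b q (Q * x) - x * (1 - a) / (1 - b) * phi11 (a * Q) (b * Q) q (Q * x)"
proof -
  define g where "g k = (1 - a) / (1 - b) * (phi11_coeff q (a * Q) (b * Q) k * Q ^ k)" for k
  have "(\<lambda>k. g k * x ^ k) sums ((1 - a) / (1 - b) * phi11 (a * Q) (b * Q) q (Q * x))"
    using sums_mult[OF phi11_sums_scaled[OF q_regular_mult_q[OF b], of "a * Q" Q x], of "(1 - a) / (1 - b)"]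
    unfolding g_def by (simp add: algebra_simps)
  then have "(\<lambda>k. (phi11_coeff q a b k * Q ^ k - (case k of 0 \<Rightarrow> 0 | Suc m \<Rightarrow> g m)) * x ^ k)
      sums (phi11 a b q (Q * x) - x * ((1 - a) / (1 - b) * phi11 (a * Q) (b * Q) q (Q * x)))"
    unfolding left_diff_distrib by (intro sums_diff phi11_sums_scaled[OF b] sums_mult_variable)
  moreover have "phi11_coeff q a b k * Q ^ k - (case k of 0 \<Rightarrow> 0 | Suc m \<Rightarrow> g m) = phi11_coeff q a b k" for k
  proof (cases k)
    case (Suc m)
    have "(1 - Q ^ Suc m) * phi11_coeff q a b (Suc m) = - g m"
      using phi11_coeff_q_difference_ab[OF b, of m a] q_regular_one_minus[OF b]
      unfolding g_def by (simp add: field_simps)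
    then show ?thesis
      using Suc by (simp add: algebra_simps)
  qed simp
  ultimately have "phi11 a b q x
      = phi11 a b q (Q * x) - x * ((1 - a) / (1 - b) * phi11 (a * Q) (b * Q) q (Q * x))"
    by (intro sums_unique2[OF phi11_sums[OF b]]) simp
  then show ?thesis
    by (simp add: algebra_simps)
qed

lemma phi11_contiguous_ab:
  assumes b: "q_regular q b"
  shows "phi11 (a * Q) (b * Q) q x
    = (1 - b) * phi11 a b q (Q * x) + (b - x) * phi11 (a * Q) (b * Q) q (Q * x)"
proof -
  define g where
    "g k = (1 - b) * (phi11_coeff q a b k * Q ^ k) + b * (phi11_coeff q (a * Q) (b * Q) k * Q ^ k)" for k
  have "(\<lambda>k. g k * x ^ k) sums ((1 - b) * phi11 a b q (Q * x) + b * phi11 (a * Q) (b * Q) q (Q * x))"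
    using sums_add[OF sums_mult[OF phi11_sums_scaled[OF b, of a Q x], of "1 - b"]
        sums_mult[OF phi11_sums_scaled[OF q_regular_mult_q[OF b], of "a * Q" Q x], of b]]
    unfolding g_def by (simp add: algebra_simps)
  then have "(\<lambda>k. (g k - (case k of 0 \<Rightarrow> 0 | Suc m \<Rightarrow> phi11_coeff q (a * Q) (b * Q) m * Q ^ m)) * x ^ k)
      sums ((1 - b) * phi11 a b q (Q * x) + b * phi11 (a * Q) (b * Q) q (Q * x)
            - x * phi11 (a * Q) (b * Q) q (Q * x))"
    unfolding left_diff_distrib
    by (intro sums_diff sums_mult_variable phi11_sums_scaled[OF q_regular_mult_q[OF b]])
  moreover have "g k - (case k of 0 \<Rightarrow> 0 | Suc m \<Rightarrow> phi11_coeff q (a * Q) (b * Q) m * Q ^ m)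
      = phi11_coeff q (a * Q) (b * Q) k" for k
    using phi11_coeff_contiguous_ab[OF b, of "k - 1" a]
    by (cases k) (simp_all add: g_def algebra_simps)
  ultimately have "phi11 (a * Q) (b * Q) q x
      = (1 - b) * phi11 a b q (Q * x) + b * phi11 (a * Q) (b * Q) q (Q * x) - x * phi11 (a * Q) (b * Q) q (Q * x)"
    by (intro sums_unique2[OF phi11_sums[OF q_regular_mult_q[OF b]]]) simp
  then show ?thesis
    by (simp add: algebra_simps)
qed

lemma isCont_phi11:
  assumes "q_regular q b"
  shows "isCont (phi11 a b q) x"
  unfolding phi11_eq_suminf[abs_def]
  by (rule isCont_powser_converges_everywhere) (rule summable_phi11_series[OF assms])

lemma phi11_0_0_functional_eq: "phi11 0 0 q w = (1 - w) * phi11 0 0 q (Q * w)"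
  using phi11_q_difference_b[OF q_regular_0, of 0 w] by simp

lemma qpoch_inf_eq_phi11_0_0: "qpoch_inf w Q = phi11 0 0 q w"
  using norm_Q_less_1 isCont_phi11[OF q_regular_0] phi11_at_0 phi11_0_0_functional_eq
  by (rule qpoch_inf_eq_functional_solution[of Q "phi11 0 0 q"])

lemma qpoch_inf_shift: "qpoch_inf w Q = (1 - w) * qpoch_inf (w * Q) Q"
  unfolding qpoch_inf_eq_phi11_0_0 using phi11_0_0_functional_eq[of w] by (simp add: ac_simps)

lemma qpoch_inf_nonzero:
  assumes "q_regular q w"
  shows "qpoch_inf w Q \<noteq> 0"
  unfolding qpoch_inf_eq_phi11_0_0
  using norm_Q_less_1 isCont_phi11[OF q_regular_0] phi11_at_0 phi11_0_0_functional_eq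
    qpoch_nonzero[OF assms] by (rule functional_solution_nonzero[of Q "phi11 0 0 q"])

definition phi11_pair_product :: "complex \<Rightarrow> complex \<Rightarrow> complex \<Rightarrow> complex" where
  "phi11_pair_product a b w =
     phi11 a b q (b / a * w) * phi11 (a / b) (Q / b) q (Q / a * w)
     + b / Q * (1 - b / a) / ((1 - b / Q) * (1 - b)) * w
       * phi11 a (b * Q) q (b * Q / a * w) * phi11 (a / b * Q) (Q / b * Q) q (Q / a * w)"

lemma phi11_pair_product_functional_eq:
  assumes "a \<noteq> 0" "b \<noteq> 0" and b: "q_regular q b" and b': "q_regular q (Q / b)"
  shows "phi11_pair_product a b w = (1 - w) * phi11_pair_product a b (Q * w)"
proof -
  have "Q \<noteq> 0" "1 - b / Q \<noteq> 0"
    using q_pos q_regular_one_minus[OF b'] by (auto simp: field_simps)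
  have A: "phi11 a b q (b / a * w) = (1 - b / a * w) * phi11 a b q (b / a * (Q * w))
      - b / a * w * (b - a) / (1 - b) * phi11 a (b * Q) q (b * Q / a * (Q * w))"
    using phi11_q_difference_b[OF b, of a "b / a * w"] by (simp add: ac_simps)
  have C: "phi11 a (b * Q) q (b * Q / a * w)
      = (1 - b) * phi11 a b q (b / a * (Q * w)) + b * phi11 a (b * Q) q (b * Q / a * (Q * w))"
    using phi11_contiguous_b[OF b, of a "Q * (b / a * w)"] by (simp add: ac_simps)
  have B: "phi11 (a / b) (Q / b) q (Q / a * w) = phi11 (a / b) (Q / b) q (Q / a * (Q * w))
      - Q / a * w * (1 - a / b) / (1 - Q / b) * phi11 (a / b * Q) (Q / b * Q) q (Q / a * (Q * w))"
    using phi11_q_difference_ab[OF b', of "a / b" "Q / a * w"] by (simp add: ac_simps)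
  have D: "phi11 (a / b * Q) (Q / b * Q) q (Q / a * w)
      = (1 - Q / b) * phi11 (a / b) (Q / b) q (Q / a * (Q * w))
        + (Q / b - Q / a * w) * phi11 (a / b * Q) (Q / b * Q) q (Q / a * (Q * w))"
    using phi11_contiguous_ab[OF b', of "a / b" "Q / a * w"] by (simp add: ac_simps)
  show ?thesis
    unfolding phi11_pair_product_def A B C D
    by (rule product_recurrence_coefficients) (use assms \<open>Q \<noteq> 0\<close> \<open>1 - b / Q \<noteq> 0\<close>
        q_regular_one_minus[OF b] q_regular_one_minus[OF b'] in auto)
qed

lemma isCont_phi11_pair_product:
  assumes "q_regular q b" "q_regular q (Q / b)"
  shows "isCont (phi11_pair_product a b) 0"
proof -
  have scaled: "isCont (\<lambda>w. phi11 a' b' q (c * w)) 0" if "q_regular q b'" for a' b' c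
    by (rule isCont_o2[OF _ isCont_phi11[OF that]]) simp
  show ?thesis
    unfolding phi11_pair_product_def[abs_def]
    by (intro continuous_intros scaled assms q_regular_mult_q)
qed

lemma qpoch_inf_eq_phi11_pair_product:
  assumes "a \<noteq> 0" "b \<noteq> 0" "q_regular q b" "q_regular q (Q / b)"
  shows "qpoch_inf w Q = phi11_pair_product a b w"
  using norm_Q_less_1 isCont_phi11_pair_product[OF assms(3,4)] _
    phi11_pair_product_functional_eq[OF assms]
  by (rule qpoch_inf_eq_functional_solution) (simp add: phi11_pair_product_def)

lemma q_regular_qpow:
  assumes "\<forall>m::int. qpow q \<gamma> \<noteq> qpow q (of_int m)"
  shows "q_regular q (qpow q \<gamma>)" "q_regular q (Q / qpow q \<gamma>)"
proof -
  show "q_regular q (qpow q \<gamma>)"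
    unfolding q_regular_def
  proof (intro allI notI)
    fix j
    assume "qpow q \<gamma> * Q ^ j = 1"
    then have "qpow q \<gamma> = qpow q (of_int (- int j))"
      using q_pos by (simp add: qpow_minus qpow_of_nat field_simps)
    with assms show False by blast
  qed
  show "q_regular q (Q / qpow q \<gamma>)"
    unfolding q_regular_def
  proof (intro allI notI)
    fix j
    assume "Q / qpow q \<gamma> * Q ^ j = 1"
    then have "qpow q \<gamma> = qpow q (of_int (int (Suc j)))"
      using q_pos qpow_nonzero[of q \<gamma>] by (simp only: of_int_of_nat_eq qpow_of_nat) (simp add: field_simps)
    with assms show False by blast
  qed
qed

lemma qpow_2: "qpow q 2 = Q * Q"
  using qpow_of_nat[OF q_pos, of 2] by (simp add: power2_eq_square)

lemma phi11_qpow_product_identity: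
  assumes "\<forall>m::int. qpow q \<gamma> \<noteq> qpow q (of_int m)"
  shows "phi11 (qpow q \<alpha>) (qpow q \<gamma>) q (qpow q (\<gamma> - \<alpha>) * z)
           * phi11 (qpow q (\<alpha> - \<gamma>)) (qpow q (1 - \<gamma>)) q (qpow q (1 - \<alpha>) * z)
         + qpow q (\<gamma> - 1) * (1 - qpow q (\<gamma> - \<alpha>)) * z
           / ((1 - qpow q (\<gamma> - 1)) * (1 - qpow q \<gamma>))
           * phi11 (qpow q \<alpha>) (qpow q (\<gamma> + 1)) q (qpow q (\<gamma> - \<alpha> + 1) * z)
           * phi11 (qpow q (\<alpha> - \<gamma> + 1)) (qpow q (2 - \<gamma>)) q (qpow q (1 - \<alpha>) * z)
         = qpoch_inf z Q"
proof -
  define a b where "a = qpow q \<alpha>" and "b = qpow q \<gamma>"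
  have "qpow q (\<gamma> - \<alpha>) = b / a" "qpow q (\<alpha> - \<gamma>) = a / b" "qpow q (1 - \<gamma>) = Q / b"
    "qpow q (1 - \<alpha>) = Q / a" "qpow q (\<gamma> - 1) = b / Q" "qpow q (\<gamma> + 1) = b * Q"
    "qpow q (\<gamma> - \<alpha> + 1) = b * Q / a" "qpow q (\<alpha> - \<gamma> + 1) = a / b * Q" "qpow q (2 - \<gamma>) = Q / b * Q"
    by (simp_all add: a_def b_def qpow_add qpow_diff qpow_1[OF q_pos] qpow_2)
  moreover have "qpoch_inf z Q = phi11_pair_product a b z"
    using qpow_nonzero q_regular_qpow[OF assms]
    unfolding a_def b_def by (intro qpoch_inf_eq_phi11_pair_product)
  ultimately show ?thesis
    unfolding phi11_pair_product_def a_def[symmetric] b_def[symmetric] by (simp add: ac_simps)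
qed

lemma psiN_1_eq:
  assumes "exp L = z"
  shows "psiN q \<alpha> \<gamma> L 1 = qpow q (- \<alpha> * (\<gamma> + 1) - \<gamma> * (\<gamma> - 1) / 2)
      * qpoch_inf (qpow q \<gamma> * Q / qpow q \<alpha>) Q / qpoch_inf (qpow q \<gamma>) Q * exp (- \<gamma> * L)
      * phi11 (qpow q \<alpha> / qpow q \<gamma>) (Q / qpow q \<gamma>) q (- (Q * z))"
proof -
  have "qpow q (of_int 1 + \<gamma> - \<alpha>) = qpow q \<gamma> * Q / qpow q \<alpha>" "qpow q (of_int 1 + \<gamma> - 1) = qpow q \<gamma>"
    "qpow q (\<alpha> - of_int 1 - \<gamma> + 1) = qpow q \<alpha> / qpow q \<gamma>" "qpow q (2 - of_int 1 - \<gamma>) = Q / qpow q \<gamma>"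
    by (simp_all add: qpow_add qpow_diff qpow_1[OF q_pos] field_simps)
  then show ?thesis
    unfolding psiN_def assms by (simp add: ac_simps)
qed

lemma psiN_0_eq:
  assumes "exp L = z"
  shows "psiN q \<alpha> \<gamma> L 0 = qpow q (- \<alpha> * (\<gamma> + 1) - \<gamma> * (\<gamma> - 1) / 2) * qpow q \<alpha> * (qpow q \<gamma> / Q)
      * qpoch_inf (qpow q \<gamma> / qpow q \<alpha>) Q / qpoch_inf (qpow q \<gamma> / Q) Q * (z * exp (- \<gamma> * L))
      * phi11 (qpow q \<alpha> / qpow q \<gamma> * Q) (Q / qpow q \<gamma> * Q) q (- (Q * z))"
proof -
  have "- \<alpha> * (of_int 0 + \<gamma>) - (of_int 0 + \<gamma> - 1) * (of_int 0 + \<gamma> - 2) / 2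
      = (- \<alpha> * (\<gamma> + 1) - \<gamma> * (\<gamma> - 1) / 2) + \<alpha> + (\<gamma> - 1)"
    by (simp add: field_simps)
  then have "qpow q (- \<alpha> * (of_int 0 + \<gamma>) - (of_int 0 + \<gamma> - 1) * (of_int 0 + \<gamma> - 2) / 2)
      = qpow q (- \<alpha> * (\<gamma> + 1) - \<gamma> * (\<gamma> - 1) / 2) * qpow q \<alpha> * (qpow q \<gamma> / Q)"
    by (simp add: qpow_add qpow_diff qpow_1[OF q_pos] mult.assoc)
  moreover have "qpow q (of_int 0 + \<gamma> - \<alpha>) = qpow q \<gamma> / qpow q \<alpha>"
    "qpow q (of_int 0 + \<gamma> - 1) = qpow q \<gamma> / Q"
    "qpow q (\<alpha> - of_int 0 - \<gamma> + 1) = qpow q \<alpha> / qpow q \<gamma> * Q"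
    "qpow q (2 - of_int 0 - \<gamma>) = Q / qpow q \<gamma> * Q"
    by (simp_all add: qpow_add qpow_diff qpow_1[OF q_pos] qpow_2)
  moreover have "exp ((1 - of_int 0 - \<gamma>) * L) = z * exp (- \<gamma> * L)"
    unfolding assms[symmetric] exp_add[symmetric] by (simp add: algebra_simps)
  ultimately show ?thesis
    unfolding psiN_def assms by (simp add: ac_simps)
qed

lemma casoratian_phiN_psiN:
  assumes \<gamma>: "\<forall>m::int. qpow q \<gamma> \<noteq> qpow q (of_int m)" and L: "exp L = z"
  shows "phiN q \<alpha> \<gamma> z 0 * psiN q \<alpha> \<gamma> L 1 - phiN q \<alpha> \<gamma> z 1 * psiN q \<alpha> \<gamma> L 0
    = qpow q (- \<alpha> * (\<gamma> + 1) - \<gamma> * (\<gamma> - 1) / 2) * qpoch_inf (qpow q (\<gamma> - \<alpha> + 1)) Q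
      * qpoch_inf (- qpow q \<alpha> * z) Q * exp (- \<gamma> * L)"
proof -
  define a b P E where "a = qpow q \<alpha>" and "b = qpow q \<gamma>"
    and "P = qpow q (- \<alpha> * (\<gamma> + 1) - \<gamma> * (\<gamma> - 1) / 2)" and "E = exp (- \<gamma> * L)"
  define R R' where "R = qpoch_inf (b * Q) Q" and "R' = qpoch_inf (b * Q / a) Q"
  define w where "w = - a * z"
  have a: "a \<noteq> 0" and b: "b \<noteq> 0" "q_regular q b" "q_regular q (Q / b)"
    using qpow_nonzero q_regular_qpow[OF \<gamma>] by (auto simp: a_def b_def)
  have "Q \<noteq> 0" "1 - b \<noteq> 0" "1 - b / Q \<noteq> 0" "R \<noteq> 0"
    using q_pos q_regular_one_minus[OF b(2)] q_regular_one_minus[OF b(3)]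
      qpoch_inf_nonzero[OF q_regular_mult_q[OF b(2)]]
    by (auto simp: R_def field_simps)
  define A B C D where "A = phi11 a b q (b / a * w)" and "B = phi11 (a / b) (Q / b) q (Q / a * w)"
    and "C = phi11 a (b * Q) q (b * Q / a * w)" and "D = phi11 (a / b * Q) (Q / b * Q) q (Q / a * w)"
  have args: "b / a * w = - (b * z)" "b * Q / a * w = - (b * Q * z)" "Q / a * w = - (Q * z)"
    using a by (simp_all add: w_def field_simps)
  have "phiN q \<alpha> \<gamma> z 0 = (1 - b) * R * A"
    unfolding phiN_def A_def R_def args by (simp add: a_def b_def qpoch_inf_shift[of "qpow q \<gamma>"])
  moreover have "phiN q \<alpha> \<gamma> z 1 = R * C"
    unfolding phiN_def C_def R_def args by (simp add: a_def b_def qpow_add qpow_1[OF q_pos] ac_simps)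
  moreover have "psiN q \<alpha> \<gamma> L 1 = P * R' / ((1 - b) * R) * E * B"
    unfolding psiN_1_eq[OF L] B_def R_def R'_def args
    by (simp add: a_def b_def P_def E_def qpoch_inf_shift[of "qpow q \<gamma>"])
  moreover have "psiN q \<alpha> \<gamma> L 0
      = P * a * (b / Q) * ((1 - b / a) * R') / ((1 - b / Q) * (1 - b) * R) * (z * E) * D"
    unfolding psiN_0_eq[OF L] D_def R_def R'_def args using \<open>Q \<noteq> 0\<close>
    by (simp add: a_def b_def P_def E_def qpoch_inf_shift[of "qpow q \<gamma> / qpow q \<alpha>"]
        qpoch_inf_shift[of "qpow q \<gamma> / Q"] qpoch_inf_shift[of "qpow q \<gamma>"])
  ultimately have "phiN q \<alpha> \<gamma> z 0 * psiN q \<alpha> \<gamma> L 1 - phiN q \<alpha> \<gamma> z 1 * psiN q \<alpha> \<gamma> L 0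
      = ((1 - b) * R * A) * (P * R' / ((1 - b) * R) * E * B)
        - (R * C) * (P * a * (b / Q) * ((1 - b / a) * R') / ((1 - b / Q) * (1 - b) * R) * (z * E) * D)"
    by simp
  also have "\<dots> = P * R' * E * (A * B) - - (P * R' * E * (b / Q * (1 - b / a) / ((1 - b / Q) * (1 - b)) * w * C * D))"
    using \<open>1 - b \<noteq> 0\<close> \<open>1 - b / Q \<noteq> 0\<close> \<open>R \<noteq> 0\<close> by (simp add: w_def)
  also have "\<dots> = P * R' * E * (A * B + b / Q * (1 - b / a) / ((1 - b / Q) * (1 - b)) * w * C * D)"
    by (simp add: algebra_simps)
  also have "\<dots> = P * R' * E * qpoch_inf w Q"
    unfolding qpoch_inf_eq_phi11_pair_product[OF a b] phi11_pair_product_def A_def B_def C_def D_def ..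
  finally show ?thesis
    by (simp add: P_def R'_def E_def w_def a_def b_def qpow_add qpow_diff qpow_1[OF q_pos] ac_simps)
qed

end

(* The hypothesis z \<noteq> 0 is implied by exp L = z. *)
theorem mainTheorem12:
  fixes q :: real and \<alpha> \<gamma> z L :: complex
  assumes "0 < q" and "q < 1"
    and "\<forall>m::int. qpow q \<gamma> \<noteq> qpow q (of_int m)"
    and "z \<noteq> 0" and "exp L = z"
  shows "phiN q \<alpha> \<gamma> z 0 * psiN q \<alpha> \<gamma> L 1 - phiN q \<alpha> \<gamma> z 1 * psiN q \<alpha> \<gamma> L 0
           = qpow q (- \<alpha> * (\<gamma> + 1) - \<gamma> * (\<gamma> - 1) / 2)
             * qpoch_inf (qpow q (\<gamma> - \<alpha> + 1)) (complex_of_real q)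
             * qpoch_inf (- qpow q \<alpha> * z) (complex_of_real q)
             * exp (- \<gamma> * L)
       \<and> phi11 (qpow q \<alpha>) (qpow q \<gamma>) q (qpow q (\<gamma> - \<alpha>) * z)
           * phi11 (qpow q (\<alpha> - \<gamma>)) (qpow q (1 - \<gamma>)) q (qpow q (1 - \<alpha>) * z)
         + qpow q (\<gamma> - 1) * (1 - qpow q (\<gamma> - \<alpha>)) * z
           / ((1 - qpow q (\<gamma> - 1)) * (1 - qpow q \<gamma>))
           * phi11 (qpow q \<alpha>) (qpow q (\<gamma> + 1)) q (qpow q (\<gamma> - \<alpha> + 1) * z)
           * phi11 (qpow q (\<alpha> - \<gamma> + 1)) (qpow q (2 - \<gamma>)) q (qpow q (1 - \<alpha>) * z)
         = qpoch_inf z (complex_of_real q)"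
proof -
  interpret q_calculus q
    using assms(1,2) by unfold_locales
  show ?thesis
    using casoratian_phiN_psiN[OF assms(3,5)] phi11_qpow_product_identity[OF assms(3)] by blast
qed

end
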